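(* Let $x_0<\dots<x_n$ and $\hat x_0<\dots<\hat x_n$ be real numbers with $\hat x_0=x_0$, $\hat x_n=x_n$, let $\mathbf{y}\in\mathbb{R}^{n+1}$, let $z_k=z_k(\mathbf{x},\hat{\mathbf{x}})$, and suppose $\Lambda(\hat{\mathbf{x}})\|\mathbf{z}\|_\infty<1$. Then for every $t\in[x_0,x_n]$, \[ \frac{|E(t;\mathbf{y},\mathbf{z})|}{1+\Lambda(\hat{\mathbf{x}})\|\mathbf{z}\|_\infty}\ \le\ \bigl|q(t;\hat{\mathbf{x}},\mathbf{y},\lambda(\mathbf{x}))-P_{\mathbf{y}}(t)\bigr|\ \le\ \frac{|E(t;\mathbf{y},\mathbf{z})|}{1-\Lambda(\hat{\mathbf{x}})\|\mathbf{z}\|_\infty}, \] and for each such $t$ there exists $\mathbf{y}'\in\mathbb{R}^{n+1}$ with $q(t;\hat{\mathbf{x}},\mathbf{y},\lambda(\mathbf{x}))=P_{\mathbf{y}'}(t)$ and \[ |y'_k-y_k|\le\frac{|z_k|+\Lambda(\hat{\mathbf{x}})\|\mathbf{z}\|_\infty}{1-\Lambda(\hat{\mathbf{x}})\|\mathbf{z}\|_\infty}\,|y_k|\qquad(0\le k\le n). \]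
   Context: $\lambda_k(\mathbf{x}):=1/\prod_{j\neq k}(x_k-x_j)$; $z_k(\mathbf{x},\hat{\mathbf{x}}):=(\lambda_k(\mathbf{x})-\lambda_k(\hat{\mathbf{x}}))/\lambda_k(\hat{\mathbf{x}})$. The second barycentric formula is $q(t;\mathbf{u},\mathbf{y},\mathbf{w}):=\dfrac{\sum_{k}\frac{w_ky_k}{t-u_k}}{\sum_k\frac{w_k}{t-u_k}}$, with value $y_k$ at $t=u_k$ (its limit). For $\mathbf{v}\in\mathbb{R}^{n+1}$, $P_{\mathbf{v}}$ is the polynomial of degree $\le n$ with $P_{\mathbf{v}}(\hat x_k)=v_k$; $\mathbf{y}\mathbf{z}$ is the componentwise product. The error polynomial is $E(t;\mathbf{y},\mathbf{z}):=P_{\mathbf{y}\mathbf{z}}(t)-P_{\mathbf{y}}(t)P_{\mathbf{z}}(t)$. $\Lambda(\hat{\mathbf{x}}):=\max_{t\in[x_0,x_n]}\sum_j|\ell_j(t)|$ with $\ell_j$ the Lagrange polynomials for $\hat{\mathbf{x}}$. *)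

theory Defs
  imports "HOL-Analysis.Analysis"
begin

text \<open>Vectors in R^(n+1) are represented as functions nat => real, indices 0..n.\<close>

definition lam :: "nat \<Rightarrow> (nat \<Rightarrow> real) \<Rightarrow> nat \<Rightarrow> real" where
  "lam n x k = 1 / (\<Prod>j\<in>{0..n} - {k}. (x k - x j))"

definition zvec :: "nat \<Rightarrow> (nat \<Rightarrow> real) \<Rightarrow> (nat \<Rightarrow> real) \<Rightarrow> nat \<Rightarrow> real" where
  "zvec n x xh k = (lam n x k - lam n xh k) / lam n xh k"

text \<open>Second barycentric formula, with its limit value y_k at the node t = u_k.\<close>
definition bary :: "nat \<Rightarrow> real \<Rightarrow> (nat \<Rightarrow> real) \<Rightarrow> (nat \<Rightarrow> real) \<Rightarrow> (nat \<Rightarrow> real) \<Rightarrow> real" where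
  "bary n t u y w =
     (if \<exists>k\<in>{0..n}. t = u k then y (SOME k. k \<in> {0..n} \<and> t = u k)
      else (\<Sum>k=0..n. w k * y k / (t - u k)) / (\<Sum>k=0..n. w k / (t - u k)))"

definition lagr :: "nat \<Rightarrow> (nat \<Rightarrow> real) \<Rightarrow> nat \<Rightarrow> real \<Rightarrow> real" where
  "lagr n xh j t = (\<Prod>i\<in>{0..n} - {j}. (t - xh i) / (xh j - xh i))"

definition interp :: "nat \<Rightarrow> (nat \<Rightarrow> real) \<Rightarrow> (nat \<Rightarrow> real) \<Rightarrow> real \<Rightarrow> real" where
  "interp n xh v t = (\<Sum>j=0..n. v j * lagr n xh j t)"

definition errpoly :: "nat \<Rightarrow> (nat \<Rightarrow> real) \<Rightarrow> (nat \<Rightarrow> real) \<Rightarrow> (nat \<Rightarrow> real) \<Rightarrow> real \<Rightarrow> real" where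
  "errpoly n xh y z t = interp n xh (\<lambda>k. y k * z k) t - interp n xh y t * interp n xh z t"

text \<open>Lebesgue constant on [xh_0, xh_n] (a maximum of a continuous function on a compact interval).\<close>
definition lebesgue_const :: "nat \<Rightarrow> (nat \<Rightarrow> real) \<Rightarrow> real" where
  "lebesgue_const n xh = (SUP t\<in>{xh 0..xh n}. (\<Sum>j=0..n. \<bar>lagr n xh j t\<bar>))"

definition supnorm :: "nat \<Rightarrow> (nat \<Rightarrow> real) \<Rightarrow> real" where
  "supnorm n v = Max ((\<lambda>k. \<bar>v k\<bar>) ` {0..n})"

end

theory Submission
  imports Defs "HOL-Computational_Algebra.Polynomial"
begin

text \<open>Write lam x = lam xh (1 + z). Dividing numerator and denominator of the barycentric
formula by the node polynomial of xh shows that the rational interpolant is the quotient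
P_(y(1+z)) / P_(1+z) = (P_y + P_(yz)) / (1 + P_z) of two interpolating polynomials on xh.
Its deviation from P_y is therefore E / (1 + P_z(t)), and |P_z(t)| \<le> \<Lambda> |z|_\<infinity> < 1 on the
interval bounds the denominator from both sides. The data y' = y (1 + z) / (1 + P_z(t)) have
the rational interpolant as their interpolant at t.\<close>

lemma strict_mono_on_nodes:
  fixes xh :: "nat \<Rightarrow> real"
  assumes "\<And>i. i < n \<Longrightarrow> xh i < xh (Suc i)"
  shows "strict_mono_on {0..n} xh"
  by (rule strict_mono_onI, rule lift_Suc_mono_less_ivl[where N = "{..<n}"]) (use assms in auto)

lemma lagr_node:
  assumes "inj_on xh {0..n}" "j \<le> n" "k \<le> n"
  shows "lagr n xh j (xh k) = (if j = k then 1 else 0)"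
proof (cases "j = k")
  case True
  then have "(xh k - xh i) / (xh j - xh i) = 1" if "i \<in> {0..n} - {j}" for i
    using that assms inj_on_eq_iff[OF assms(1), of j i] by auto
  then show ?thesis
    using True unfolding lagr_def by simp
next
  case False
  then have "k \<in> {0..n} - {j}"
    using assms by auto
  then show ?thesis
    using False unfolding lagr_def by (subst prod_zero) auto
qed

lemma interp_node:
  assumes "inj_on xh {0..n}" "k \<le> n"
  shows "interp n xh v (xh k) = v k"
proof -
  have "interp n xh v (xh k) = (\<Sum>j=0..n. if j = k then v j else 0)"
    unfolding interp_def using lagr_node[OF assms(1)] assms(2) by (intro sum.cong) auto
  then show ?thesis
    using assms(2) by simp
qed

lemma interp_add: "interp n xh (\<lambda>k. u k + v k) t = interp n xh u t + interp n xh v t"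
  unfolding interp_def by (simp add: sum.distrib distrib_right)

lemma interp_divide: "interp n xh (\<lambda>k. v k / a) t = interp n xh v t / a"
  unfolding interp_def by (simp add: sum_divide_distrib)

definition lagr_poly :: "nat \<Rightarrow> (nat \<Rightarrow> real) \<Rightarrow> nat \<Rightarrow> real poly" where
  "lagr_poly n xh j = (\<Prod>i\<in>{0..n} - {j}. smult (1 / (xh j - xh i)) [:- xh i, 1:])"

lemma poly_lagr_poly: "poly (lagr_poly n xh j) t = lagr n xh j t"
  unfolding lagr_poly_def lagr_def poly_prod by (intro prod.cong) (auto simp: diff_divide_distrib)

lemma degree_lagr_poly_le:
  assumes "j \<le> n"
  shows "degree (lagr_poly n xh j) \<le> n"
proof -
  have "degree (lagr_poly n xh j)
      \<le> (\<Sum>i\<in>{0..n} - {j}. degree (smult (1 / (xh j - xh i)) [:- xh i, 1:]))"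
    unfolding lagr_poly_def by (rule degree_prod_sum_le[unfolded comp_def]) simp
  also have "\<dots> \<le> (\<Sum>i\<in>{0..n} - {j}. 1)"
    by (intro sum_mono) (simp add: degree_smult_le)
  also have "\<dots> = n"
    using assms by simp
  finally show ?thesis .
qed

text \<open>Both sides are polynomials of degree at most \<open>n\<close> that agree at the \<open>n + 1\<close> nodes.\<close>

lemma sum_lagr_eq_1:
  assumes "inj_on xh {0..n}"
  shows "(\<Sum>j=0..n. lagr n xh j t) = 1"
proof -
  have card_nodes: "card (xh ` {0..n}) = Suc n"
    using card_image[OF assms] by simp
  have "(\<Sum>j=0..n. lagr_poly n xh j) = 1"
  proof (rule poly_eqI_degree[where A = "xh ` {0..n}"])
    fix s assume "s \<in> xh ` {0..n}"
    then obtain k where "k \<le> n" "s = xh k"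
      by auto
    then show "poly (\<Sum>j=0..n. lagr_poly n xh j) s = poly 1 s"
      using lagr_node[OF assms] by (simp add: poly_sum poly_lagr_poly)
  next
    have "degree (\<Sum>j=0..n. lagr_poly n xh j) \<le> n"
      by (rule degree_sum_le) (auto intro: degree_lagr_poly_le)
    then show "degree (\<Sum>j=0..n. lagr_poly n xh j) < card (xh ` {0..n})"
      using card_nodes by simp
  qed (use card_nodes in simp)
  then show ?thesis
    by (metis (no_types) poly_1 poly_lagr_poly poly_sum sum.cong)
qed

lemma interp_1_plus:
  assumes "inj_on xh {0..n}"
  shows "interp n xh (\<lambda>k. 1 + v k) t = 1 + interp n xh v t"
  using sum_lagr_eq_1[OF assms] unfolding interp_add by (simp add: interp_def)

lemma lam_nonzero:
  assumes "inj_on xh {0..n}" "k \<le> n"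
  shows "lam n xh k \<noteq> 0"
  using assms inj_on_eq_iff[OF assms(1), of k] unfolding lam_def by auto

lemma lagr_eq_lam_node_poly:
  assumes "k \<le> n" "t \<noteq> xh k"
  shows "lagr n xh k t = lam n xh k * (\<Prod>i\<in>{0..n}. t - xh i) / (t - xh k)"
proof -
  have "(\<Prod>i\<in>{0..n}. t - xh i) = (t - xh k) * (\<Prod>i\<in>{0..n} - {k}. t - xh i)"
    using assms(1) by (subst prod.remove[of _ k]) auto
  then show ?thesis
    using assms(2) unfolding lagr_def lam_def prod_dividef by simp
qed

text \<open>Away from the nodes both barycentric sums are the interpolants divided by the node
polynomial; the nonvanishing hypothesis matters only at a node xh k, where it says w k \<noteq> 0.\<close>

lemma bary_eq_interp_quotient:
  assumes inj: "inj_on xh {0..n}"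
    and nonzero: "interp n xh (\<lambda>k. w k / lam n xh k) t \<noteq> 0"
  shows "bary n t xh y w
    = interp n xh (\<lambda>k. y k * w k / lam n xh k) t / interp n xh (\<lambda>k. w k / lam n xh k) t"
proof (cases "\<exists>k\<in>{0..n}. t = xh k")
  case True
  then obtain k where k: "k \<le> n" "t = xh k"
    by auto
  have some_node: "(SOME k. k \<in> {0..n} \<and> t = xh k) = k"
    using k inj_on_eq_iff[OF inj] by (intro some_equality) auto
  have "w k \<noteq> 0"
    using nonzero interp_node[OF inj k(1)] k by simp
  then show ?thesis
    using True some_node lam_nonzero[OF inj k(1)] unfolding bary_def k(2)
    by (simp add: interp_node[OF inj k(1)])
next
  case False
  define L where "L = (\<Prod>i\<in>{0..n}. t - xh i)"
  have "L \<noteq> 0"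
    using False unfolding L_def by auto
  have summand: "w k * v / (t - xh k) = v * w k / lam n xh k * lagr n xh k t / L"
    if "k \<in> {0..n}" for k v
    using that False \<open>L \<noteq> 0\<close> lam_nonzero[OF inj, of k]
    by (auto simp: lagr_eq_lam_node_poly L_def[symmetric])
  have "(\<Sum>k=0..n. w k * y k / (t - xh k)) = interp n xh (\<lambda>k. y k * w k / lam n xh k) t / L"
    unfolding interp_def sum_divide_distrib by (intro sum.cong refl summand)
  moreover have "(\<Sum>k=0..n. w k / (t - xh k)) = interp n xh (\<lambda>k. w k / lam n xh k) t / L"
    unfolding interp_def sum_divide_distrib using summand[where v = 1] by (intro sum.cong refl) simp
  ultimately show ?thesis
    using False \<open>L \<noteq> 0\<close> unfolding bary_def by simp
qed

lemma lam_divide_lam_eq_1_plus_zvec: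
  assumes "inj_on xh {0..n}" "k \<le> n"
  shows "lam n x k / lam n xh k = 1 + zvec n x xh k"
  using lam_nonzero[OF assms] unfolding zvec_def by (simp add: field_simps)

lemma bary_perturbed_weights:
  assumes inj: "inj_on xh {0..n}"
    and nonzero: "1 + interp n xh (zvec n x xh) t \<noteq> 0"
  shows "bary n t xh y (lam n x)
    = interp n xh (\<lambda>k. y k * (1 + zvec n x xh k) / (1 + interp n xh (zvec n x xh) t)) t"
    and "bary n t xh y (lam n x) - interp n xh y t
    = errpoly n xh y (zvec n x xh) t / (1 + interp n xh (zvec n x xh) t)"
proof -
  let ?z = "zvec n x xh"
  have weights: "interp n xh (\<lambda>k. v k * lam n x k / lam n xh k) t = interp n xh (\<lambda>k. v k * (1 + ?z k)) t"
    for v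
    unfolding interp_def using lam_divide_lam_eq_1_plus_zvec[OF inj]
    by (intro sum.cong) (auto simp: times_divide_eq_right[symmetric])
  have den: "interp n xh (\<lambda>k. lam n x k / lam n xh k) t = 1 + interp n xh ?z t"
    using weights[of "\<lambda>_. 1"] interp_1_plus[OF inj] by simp
  have bary: "bary n t xh y (lam n x) = interp n xh (\<lambda>k. y k * (1 + ?z k)) t / (1 + interp n xh ?z t)"
    using bary_eq_interp_quotient[OF inj, of "lam n x" t y] nonzero den weights by simp
  then show "bary n t xh y (lam n x) = interp n xh (\<lambda>k. y k * (1 + ?z k) / (1 + interp n xh ?z t)) t"
    by (simp add: interp_divide)
  have "interp n xh (\<lambda>k. y k * (1 + ?z k)) t = interp n xh y t + interp n xh (\<lambda>k. y k * ?z k) t"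
    by (simp add: distrib_left interp_add)
  then show "bary n t xh y (lam n x) - interp n xh y t = errpoly n xh y ?z t / (1 + interp n xh ?z t)"
    using nonzero unfolding bary errpoly_def by (simp add: field_simps)
qed

lemma sum_abs_lagr_le_lebesgue_const:
  assumes "inj_on xh {0..n}" "t \<in> {xh 0..xh n}"
  shows "(\<Sum>j=0..n. \<bar>lagr n xh j t\<bar>) \<le> lebesgue_const n xh"
proof -
  have "continuous_on {xh 0..xh n} (\<lambda>t. \<Sum>j=0..n. \<bar>lagr n xh j t\<bar>)"
    unfolding lagr_def using inj_on_eq_iff[OF assms(1)] by (intro continuous_intros) auto
  then have "bdd_above ((\<lambda>t. \<Sum>j=0..n. \<bar>lagr n xh j t\<bar>) ` {xh 0..xh n})"
    by (intro bounded_imp_bdd_above compact_imp_bounded compact_continuous_image) simp_all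
  then show ?thesis
    unfolding lebesgue_const_def using assms(2) by (rule cSUP_upper2) simp
qed

lemma abs_le_supnorm: "k \<le> n \<Longrightarrow> \<bar>v k\<bar> \<le> supnorm n v"
  unfolding supnorm_def by (intro Max_ge) auto

lemma abs_interp_le:
  assumes "inj_on xh {0..n}" "t \<in> {xh 0..xh n}"
  shows "\<bar>interp n xh v t\<bar> \<le> lebesgue_const n xh * supnorm n v"
proof -
  have "\<bar>interp n xh v t\<bar> \<le> (\<Sum>j=0..n. \<bar>v j\<bar> * \<bar>lagr n xh j t\<bar>)"
    unfolding interp_def abs_mult[symmetric] by (rule sum_abs)
  also have "\<dots> \<le> (\<Sum>j=0..n. supnorm n v * \<bar>lagr n xh j t\<bar>)"
    by (intro sum_mono mult_right_mono abs_le_supnorm) auto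
  also have "\<dots> \<le> supnorm n v * lebesgue_const n xh"
    unfolding sum_distrib_left[symmetric]
    using abs_le_supnorm[of 0 n v] sum_abs_lagr_le_lebesgue_const[OF assms]
    by (intro mult_left_mono) auto
  finally show ?thesis
    by (simp add: mult.commute)
qed

lemma abs_divide_1_plus_bounds:
  fixes e p c :: real
  assumes "\<bar>p\<bar> \<le> c" "c < 1"
  shows "\<bar>e\<bar> / (1 + c) \<le> \<bar>e / (1 + p)\<bar>" and "\<bar>e / (1 + p)\<bar> \<le> \<bar>e\<bar> / (1 - c)"
  using assms by (auto simp: abs_divide abs_le_iff intro!: divide_left_mono)

lemma abs_rescaled_minus_le:
  fixes y z p c :: real
  assumes "\<bar>p\<bar> \<le> c" "c < 1"
  shows "\<bar>y * (1 + z) / (1 + p) - y\<bar> \<le> (\<bar>z\<bar> + c) / (1 - c) * \<bar>y\<bar>"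
proof -
  have "y * (1 + z) / (1 + p) - y = y * (z - p) / (1 + p)"
    using assms by (simp add: field_simps)
  also have "\<bar>\<dots>\<bar> = \<bar>y\<bar> * \<bar>z - p\<bar> / (1 + p)"
    using assms by (simp add: abs_divide abs_mult)
  also have "\<dots> \<le> \<bar>y\<bar> * (\<bar>z\<bar> + c) / (1 - c)"
    using assms by (intro frac_le mult_left_mono) auto
  finally show ?thesis
    by (simp add: mult.commute)
qed

theorem theorem3:
  fixes n :: nat and x xh y :: "nat \<Rightarrow> real"
  assumes x_inc: "\<And>i. i < n \<Longrightarrow> x i < x (Suc i)"
      and xh_inc: "\<And>i. i < n \<Longrightarrow> xh i < xh (Suc i)"
      and ends0: "xh 0 = x 0" and endsn: "xh n = x n"
      and small: "lebesgue_const n xh * supnorm n (zvec n x xh) < 1"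
  shows "\<forall>t\<in>{x 0..x n}.
     \<bar>errpoly n xh y (zvec n x xh) t\<bar> / (1 + lebesgue_const n xh * supnorm n (zvec n x xh))
       \<le> \<bar>bary n t xh y (lam n x) - interp n xh y t\<bar>
     \<and> \<bar>bary n t xh y (lam n x) - interp n xh y t\<bar>
       \<le> \<bar>errpoly n xh y (zvec n x xh) t\<bar> / (1 - lebesgue_const n xh * supnorm n (zvec n x xh))
     \<and> (\<exists>y' :: nat \<Rightarrow> real. bary n t xh y (lam n x) = interp n xh y' t \<and>
          (\<forall>k\<in>{0..n}. \<bar>y' k - y k\<bar> \<le>
             (\<bar>zvec n x xh k\<bar> + lebesgue_const n xh * supnorm n (zvec n x xh))
             / (1 - lebesgue_const n xh * supnorm n (zvec n x xh)) * \<bar>y k\<bar>))"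
    (is "\<forall>t\<in>_. ?claim t")
proof
  fix t assume "t \<in> {x 0..x n}"
  then have t: "t \<in> {xh 0..xh n}"
    using ends0 endsn by simp
  have inj: "inj_on xh {0..n}"
    using strict_mono_on_imp_inj_on[OF strict_mono_on_nodes] xh_inc by blast
  define p where "p = interp n xh (zvec n x xh) t"
  have p_le: "\<bar>p\<bar> \<le> lebesgue_const n xh * supnorm n (zvec n x xh)"
    unfolding p_def by (rule abs_interp_le[OF inj t])
  then have "1 + p \<noteq> 0"
    using small by linarith
  note quotient = bary_perturbed_weights[OF inj this[unfolded p_def], folded p_def]
  show "?claim t"
    unfolding quotient(2)
    using abs_divide_1_plus_bounds[OF p_le small] abs_rescaled_minus_le[OF p_le small]
    by (intro conjI exI[of _ "\<lambda>k. y k * (1 + zvec n x xh k) / (1 + p)"] quotient(1) ballI) auto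
qed

end
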